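(* Let $0<a,b<1$, $r>as$, $s>br$, and consider the variable-control system $$x_{n+1}=x_n[(1-\alpha_{n+1})e^{r-x_n-ay_n}+\alpha_{n+1}],\quad y_{n+1}=y_n[(1-\beta_{n+1})e^{s-bx_n-y_n}+\beta_{n+1}],\quad n\in\mathbb N_0.$$ The equilibrium $K=(p,q)$ is locally asymptotically stable if either of the following holds: (a) there exist $\lambda\in(0,1)$, a norm on $\mathbb R^2$ (with induced matrix norm $\|\cdot\|$) and constants $0\le\alpha_*<\alpha^*<1$, $0\le\beta_*<\beta^*<1$ such that for all $n$, $\alpha_n\in(\alpha_*,\alpha^* )$, $\beta_n\in(\beta_*,\beta^* )$ and $\|J_{\alpha_n,\beta_n}\|\le\lambda$; (b) there are constants $0\le\alpha_*<\alpha^*<1$, $0\le\beta_*<\beta^*<1$ with $\alpha_*\in\big(\max\{1-\frac{2}{p(1+a)},0\},1\big)$, $\beta_*\in\big(\max\{1-\frac{2}{q(1+b)},0\},1\big)$, and $\alpha_n\in(\alpha_*,\alpha^* )$, $\beta_n\in(\beta_*,\beta^* )$ for all $n\in\mathbb N_0$.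
   Context: $p=\frac{r-as}{1-ab}$, $q=\frac{s-br}{1-ab}$, $K=(p,q)$. For $\alpha,\beta\in[0,1)$ the Jacobian of the controlled Ricker map at $K$ is $J_{\alpha,\beta}=\begin{pmatrix}1-(1-\alpha)p & -a(1-\alpha)p\\ -b(1-\beta)q & 1-(1-\beta)q\end{pmatrix}$. *)

theory Defs
  imports "HOL-Analysis.Analysis"
begin

definition eq_p :: "real \<Rightarrow> real \<Rightarrow> real \<Rightarrow> real \<Rightarrow> real" where
  "eq_p a b r s = (r - a * s) / (1 - a * b)"
definition eq_q :: "real \<Rightarrow> real \<Rightarrow> real \<Rightarrow> real \<Rightarrow> real" where
  "eq_q a b r s = (s - b * r) / (1 - a * b)"

text \<open>Trajectory of the variable-control Ricker system started at (x0,y0) at time 0;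
  step n uses the controls alpha (n+1), beta (n+1).\<close>
primrec traj :: "real \<Rightarrow> real \<Rightarrow> real \<Rightarrow> real \<Rightarrow> (nat \<Rightarrow> real) \<Rightarrow> (nat \<Rightarrow> real)
   \<Rightarrow> real \<times> real \<Rightarrow> nat \<Rightarrow> real \<times> real" where
  "traj a b r s alpha beta z0 0 = z0"
| "traj a b r s alpha beta z0 (Suc n) =
     (let (x, y) = traj a b r s alpha beta z0 n in
      (x * ((1 - alpha (Suc n)) * exp (r - x - a * y) + alpha (Suc n)),
       y * ((1 - beta (Suc n)) * exp (s - b * x - y) + beta (Suc n))))"

definition loc_asym_stable ::
  "real \<Rightarrow> real \<Rightarrow> real \<Rightarrow> real \<Rightarrow> (nat \<Rightarrow> real) \<Rightarrow> (nat \<Rightarrow> real) \<Rightarrow> bool" where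
  "loc_asym_stable a b r s alpha beta \<longleftrightarrow>
     (let K = (eq_p a b r s, eq_q a b r s) in
      (\<forall>\<epsilon>>0. \<exists>\<delta>>0. \<forall>z0. dist z0 K < \<delta> \<longrightarrow>
          (\<forall>n. dist (traj a b r s alpha beta z0 n) K < \<epsilon>)) \<and>
      (\<exists>\<delta>>0. \<forall>z0. dist z0 K < \<delta> \<longrightarrow>
          (traj a b r s alpha beta z0 \<longlonglongrightarrow> K)))"

definition jac :: "real \<Rightarrow> real \<Rightarrow> real \<Rightarrow> real \<Rightarrow> real \<Rightarrow> real \<Rightarrow> real^2^2" where
  "jac a b r s al be =
     (let p = eq_p a b r s; q = eq_q a b r s in
      vector [vector [1 - (1 - al) * p, - a * (1 - al) * p],
              vector [- b * (1 - be) * q, 1 - (1 - be) * q]])"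

definition is_norm_R2 :: "(real^2 \<Rightarrow> real) \<Rightarrow> bool" where
  "is_norm_R2 N \<longleftrightarrow>
     (\<forall>x. 0 \<le> N x) \<and> (\<forall>x. N x = 0 \<longleftrightarrow> x = 0) \<and>
     (\<forall>c x. N (c *\<^sub>R x) = \<bar>c\<bar> * N x) \<and> (\<forall>x y. N (x + y) \<le> N x + N y)"

definition induced_norm :: "(real^2 \<Rightarrow> real) \<Rightarrow> real^2^2 \<Rightarrow> real" where
  "induced_norm N A = Sup {N (A *v x) | x. N x = 1}"

end

theory Submission
  imports Defs
begin

(* With h = z - K, the identities r = p + a q and s = b p + q turn one step of the system into
   h |-> J_n h + R_n(h), where |R_n(h)| <= 4 (p + q + 2) |h|^2 for |h| <= 1/2, uniformly in the
   controls. If every J_n contracts one fixed norm by a factor lam < 1, then on a small ball the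
   nonlinear step contracts that norm by (1 + lam)/2, which gives stability and exponential
   convergence to K; this is (a). Under (b) the absolute row sums of J_n stay below a constant
   less than 1, so all J_n contract the maximum norm by that constant. *)

lemma convex_on_seminorm:
  fixes N :: "'a::real_vector \<Rightarrow> real"
  assumes hom: "\<And>c x. N (c *\<^sub>R x) = \<bar>c\<bar> * N x"
    and tri: "\<And>x y. N (x + y) \<le> N x + N y"
  shows "convex_on UNIV N"
proof (rule convex_onI)
  fix t :: real and x y :: 'a
  assume "0 < t" "t < 1"
  then show "N ((1 - t) *\<^sub>R x + t *\<^sub>R y) \<le> (1 - t) * N x + t * N y"
    using tri[of "(1 - t) *\<^sub>R x" "t *\<^sub>R y"] by (simp add: hom)
qed simp

lemma norm_axioms_imp_equivalent_to_norm:
  fixes N :: "'a::euclidean_space \<Rightarrow> real"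
  assumes zero: "\<And>x. N x = 0 \<longleftrightarrow> x = 0"
    and hom: "\<And>c x. N (c *\<^sub>R x) = \<bar>c\<bar> * N x"
    and tri: "\<And>x y. N (x + y) \<le> N x + N y"
  obtains m M where "0 < m" "\<And>x. m * norm x \<le> N x" "0 < M" "\<And>x. N x \<le> M * norm x"
proof -
  have "continuous_on UNIV N"
    by (rule convex_on_continuous[OF open_UNIV convex_on_seminorm[OF hom tri]])
  then have cont: "continuous_on (sphere 0 1) N"
    by (rule continuous_on_subset) simp
  have ne: "sphere (0::'a) 1 \<noteq> {}"
    by simp
  obtain x0 where x0: "x0 \<in> sphere 0 1" "\<And>y. y \<in> sphere 0 1 \<Longrightarrow> N x0 \<le> N y"
    using continuous_attains_inf[OF compact_sphere ne cont] by blast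
  obtain x1 where x1: "x1 \<in> sphere 0 1" "\<And>y. y \<in> sphere 0 1 \<Longrightarrow> N y \<le> N x1"
    using continuous_attains_sup[OF compact_sphere ne cont] by blast
  have polar: "N x = norm x * N (sgn x)" for x
    using hom[of "norm x" "sgn x"] by (cases "x = 0") (simp_all add: zero sgn_div_norm)
  have sgn_sphere: "sgn x \<in> sphere 0 1" if "x \<noteq> 0" for x :: 'a
    using that by (simp add: dist_norm norm_sgn)
  have N_zero: "N 0 = 0"
    using zero by simp
  have N_nonneg: "0 \<le> N x" for x
    using tri[of x "-x"] hom[of "-1" x] N_zero by simp
  show thesis
  proof
    show "0 < N x0"
      using x0(1) N_nonneg[of x0] zero[of x0] by auto
    show "0 < N x1"
      using x1(1) N_nonneg[of x1] zero[of x1] by auto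
    show "N x0 * norm x \<le> N x" for x
      using x0(2)[OF sgn_sphere, of x] polar[of x]
      by (cases "x = 0") (simp_all add: N_zero mult.commute)
    show "N x \<le> N x1 * norm x" for x
      using x1(2)[OF sgn_sphere, of x] polar[of x]
      by (cases "x = 0") (simp_all add: N_zero mult.commute mult_left_mono)
  qed
qed

lemma is_norm_R2_imp_equivalent_to_norm:
  assumes "is_norm_R2 N"
  obtains m M where "0 < m" "\<And>x. m * norm x \<le> N x" "0 < M" "\<And>x. N x \<le> M * norm x"
proof (rule norm_axioms_imp_equivalent_to_norm)
  show "N x = 0 \<longleftrightarrow> x = 0" "N (c *\<^sub>R x) = \<bar>c\<bar> * N x" "N (x + y) \<le> N x + N y" for x y c
    using assms unfolding is_norm_R2_def by simp_all
qed (rule that)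

lemma bdd_above_induced_norm_set:
  assumes N: "is_norm_R2 N"
  shows "bdd_above {N (A *v y) | y. N y = 1}"
proof -
  obtain m M where m: "0 < m" "\<And>x. m * norm x \<le> N x" and M: "0 < M" "\<And>x. N x \<le> M * norm x"
    using is_norm_R2_imp_equivalent_to_norm[OF N] by blast
  obtain B where B: "0 < B" "\<And>x. norm (A *v x) \<le> norm x * B"
    using bounded_linear.pos_bounded[OF matrix_vector_mul_bounded_linear[of A]] by auto
  show ?thesis
  proof (rule bdd_aboveI)
    fix t assume "t \<in> {N (A *v y) | y. N y = 1}"
    then obtain y where y: "N y = 1" "t = N (A *v y)" by blast
    have "norm y \<le> 1 / m"
      using m(1) m(2)[of y] y(1) by (simp add: field_simps)
    have "t \<le> M * norm (A *v y)"
      using y(2) M(2) by simp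
    also have "\<dots> \<le> M * (norm y * B)"
      using M(1) B(2) by (simp add: mult_left_mono)
    also have "\<dots> \<le> M * ((1 / m) * B)"
      using M(1) B(1) \<open>norm y \<le> 1 / m\<close> by (intro mult_left_mono mult_right_mono) auto
    finally show "t \<le> M * B / m"
      by simp
  qed
qed

lemma induced_norm_bound:
  assumes N: "is_norm_R2 N"
  shows "N (A *v x) \<le> induced_norm N A * N x"
proof -
  have hom: "\<And>c x. N (c *\<^sub>R x) = \<bar>c\<bar> * N x" and zero: "\<And>x. N x = 0 \<longleftrightarrow> x = 0"
    and pos: "\<And>x. 0 \<le> N x"
    using N unfolding is_norm_R2_def by auto
  show ?thesis
  proof (cases "x = 0")
    case True
    then show ?thesis
      using zero[of 0] by simp
  next
    case False
    then have Nx: "0 < N x"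
      using pos zero by (metis less_eq_real_def)
    then have "N ((1 / N x) *\<^sub>R x) = 1"
      by (simp add: hom)
    then have "N (A *v ((1 / N x) *\<^sub>R x)) \<le> induced_norm N A"
      unfolding induced_norm_def by (intro cSup_upper bdd_above_induced_norm_set[OF N]) blast
    then show ?thesis
      using Nx by (simp add: matrix_vector_mult_scaleR hom field_simps)
  qed
qed

lemma is_norm_R2_infnorm: "is_norm_R2 infnorm"
  by (simp add: is_norm_R2_def infnorm_pos_le infnorm_eq_0 infnorm_mul infnorm_triangle)

lemma infnorm_matrix_vector_mult_le:
  fixes A :: "real^'n^'m"
  assumes row_sums: "\<And>i. (\<Sum>j\<in>UNIV. \<bar>A $ i $ j\<bar>) \<le> L"
  shows "infnorm (A *v x) \<le> L * infnorm x"
proof -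
  have "\<bar>(A *v x) $ i\<bar> \<le> L * infnorm x" for i
  proof -
    have "\<bar>(A *v x) $ i\<bar> \<le> (\<Sum>j\<in>UNIV. \<bar>A $ i $ j\<bar> * infnorm x)"
      unfolding matrix_vector_mult_def vec_lambda_beta
      by (rule order_trans[OF sum_abs sum_mono])
        (simp add: abs_mult mult_left_mono component_le_infnorm_cart)
    also have "\<dots> \<le> L * infnorm x"
      using row_sums[of i] by (simp add: sum_distrib_right[symmetric] mult_right_mono infnorm_pos_le)
    finally show ?thesis .
  qed
  then show ?thesis
    unfolding infnorm_cart[of "A *v x"] by (intro cSup_least) auto
qed

lemma abs_exp_sub_one_sub_le_square:
  fixes t :: real
  assumes "\<bar>t\<bar> \<le> 1"
  shows "\<bar>exp t - 1 - t\<bar> \<le> t\<^sup>2"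
proof -
  have "exp t \<le> 1 + t + t\<^sup>2"
  proof (cases "0 \<le> t")
    case True
    then show ?thesis
      using exp_bound[of t] assms by simp
  next
    case False
    have "(1 + t + t\<^sup>2) * (1 + (- t)) = 1 + (- t) * t\<^sup>2"
      by (simp add: algebra_simps power2_eq_square)
    also have "\<dots> \<ge> 1"
      using False by (simp add: mult_nonpos_nonneg)
    finally have "1 \<le> (1 + t + t\<^sup>2) * (1 + (- t))" .
    also have "\<dots> \<le> (1 + t + t\<^sup>2) * exp (- t)"
      using assms zero_le_power2[of t] by (intro mult_left_mono exp_ge_add_one_self) linarith
    finally show ?thesis
      using False by (simp add: exp_minus field_simps)
  qed
  moreover have "1 + t \<le> exp t"
    by (rule exp_ge_add_one_self)
  moreover have "0 \<le> t\<^sup>2"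
    by simp
  ultimately show ?thesis
    unfolding abs_le_iff by linarith
qed

lemma ricker_factor_remainder:
  fixes p u w c :: real
  assumes "\<bar>w\<bar> \<le> 1" "0 \<le> c" "c \<le> 1" "0 \<le> p"
  shows "\<bar>(p + u) * (c * exp (- w) + (1 - c)) - p - (u - c * p * w)\<bar> \<le> p * w\<^sup>2 + 2 * \<bar>u\<bar> * \<bar>w\<bar>"
proof -
  define A where "A = exp (- w) - 1 + w"
  define B where "B = exp (- w) - 1"
  have A: "\<bar>A\<bar> \<le> w\<^sup>2"
    using abs_exp_sub_one_sub_le_square[of "- w"] assms(1) unfolding A_def by simp
  have "w\<^sup>2 \<le> \<bar>w\<bar>"
    using mult_left_mono[OF assms(1) abs_ge_zero[of w]] by (simp add: power2_eq_square)
  then have B: "\<bar>B\<bar> \<le> 2 * \<bar>w\<bar>"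
    using A unfolding A_def B_def by linarith
  have "(p + u) * (c * exp (- w) + (1 - c)) - p - (u - c * p * w) = c * (p * A + u * B)"
    unfolding A_def B_def by (simp add: algebra_simps)
  then have "\<bar>(p + u) * (c * exp (- w) + (1 - c)) - p - (u - c * p * w)\<bar> = c * \<bar>p * A + u * B\<bar>"
    using assms(2) by (simp add: abs_mult)
  also have "\<dots> \<le> \<bar>p * A + u * B\<bar>"
    using assms(2,3) by (intro mult_left_le_one_le) simp_all
  also have "\<dots> \<le> p * \<bar>A\<bar> + \<bar>u\<bar> * \<bar>B\<bar>"
    using abs_triangle_ineq[of "p * A" "u * B"] assms(4) by (simp add: abs_mult)
  also have "\<dots> \<le> p * w\<^sup>2 + \<bar>u\<bar> * (2 * \<bar>w\<bar>)"
    using A B assms(4) by (intro add_mono mult_left_mono) simp_all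
  finally show ?thesis
    by simp
qed

lemma ricker_factor_remainder_le:
  fixes p u v k c \<rho> :: real
  assumes "0 \<le> p" "0 \<le> c" "c \<le> 1" "0 \<le> k" "k \<le> 1" "\<bar>u\<bar> \<le> \<rho>" "\<bar>v\<bar> \<le> \<rho>" "\<rho> \<le> 1 / 2"
  shows "\<bar>(p + u) * (c * exp (- (u + k * v)) + (1 - c)) - p - (u - c * p * (u + k * v))\<bar>
    \<le> 4 * (p + 1) * \<rho>\<^sup>2"
proof -
  have "\<bar>k * v\<bar> \<le> \<rho>"
    using assms mult_mono[of k 1 "\<bar>v\<bar>" \<rho>] by (simp add: abs_mult)
  then have w: "\<bar>u + k * v\<bar> \<le> 2 * \<rho>"
    using assms abs_triangle_ineq[of u "k * v"] by linarith
  have "\<bar>(p + u) * (c * exp (- (u + k * v)) + (1 - c)) - p - (u - c * p * (u + k * v))\<bar>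
      \<le> p * (u + k * v)\<^sup>2 + 2 * \<bar>u\<bar> * \<bar>u + k * v\<bar>"
    using w assms by (intro ricker_factor_remainder) simp_all
  also have "\<dots> \<le> p * (2 * \<rho>)\<^sup>2 + 2 * \<rho> * (2 * \<rho>)"
  proof (intro add_mono mult_left_mono mult_mono)
    show "(u + k * v)\<^sup>2 \<le> (2 * \<rho>)\<^sup>2"
      using w abs_le_square_iff[of "u + k * v" "2 * \<rho>"] by simp
  qed (use w assms in simp_all)
  finally show ?thesis
    by (simp add: algebra_simps power2_eq_square)
qed

definition ricker_step :: "real \<Rightarrow> real \<Rightarrow> real \<Rightarrow> real \<Rightarrow> real \<Rightarrow> real \<Rightarrow> real \<times> real \<Rightarrow> real \<times> real"
  where "ricker_step a b r s al be z =
    (let (x, y) = z in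
     (x * ((1 - al) * exp (r - x - a * y) + al), y * ((1 - be) * exp (s - b * x - y) + be)))"

lemma traj_Suc_ricker_step:
  "traj a b r s alpha beta z0 (Suc n) =
   ricker_step a b r s (alpha (Suc n)) (beta (Suc n)) (traj a b r s alpha beta z0 n)"
  by (simp add: ricker_step_def)

definition deviation :: "real \<Rightarrow> real \<Rightarrow> real \<Rightarrow> real \<Rightarrow> real \<times> real \<Rightarrow> real^2"
  where "deviation a b r s z = vector [fst z - eq_p a b r s, snd z - eq_q a b r s]"

lemma norm_deviation: "norm (deviation a b r s z) = dist z (eq_p a b r s, eq_q a b r s)"
  by (cases z) (simp add: deviation_def norm_vec_def L2_set_def sum_2 dist_Pair_Pair dist_real_def)

lemma matrix_vector_mult_2:
  "(vector [vector [a11, a12], vector [a21, a22]] :: real^2^2) *v vector [u, v]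
    = vector [a11 * u + a12 * v, a21 * u + a22 * v]"
  by (simp add: vec_eq_iff forall_2 matrix_vector_mult_def sum_2)

lemma eq_p_eq_q_equilibrium:
  assumes "a * b \<noteq> 1"
  shows "eq_p a b r s + a * eq_q a b r s = r" "b * eq_p a b r s + eq_q a b r s = s"
proof -
  have nz: "1 - a * b \<noteq> 0"
    using assms by simp
  have "eq_p a b r s + a * eq_q a b r s = r * (1 - a * b) / (1 - a * b)"
    unfolding eq_p_def eq_q_def by (simp add: add_divide_distrib[symmetric] algebra_simps)
  then show "eq_p a b r s + a * eq_q a b r s = r"
    using nz by simp
  have "b * eq_p a b r s + eq_q a b r s = s * (1 - a * b) / (1 - a * b)"
    unfolding eq_p_def eq_q_def by (simp add: add_divide_distrib[symmetric] algebra_simps)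
  then show "b * eq_p a b r s + eq_q a b r s = s"
    using nz by simp
qed

lemma eq_p_eq_q_pos:
  assumes "a * b < 1" "a * s < r" "b * r < s"
  shows "0 < eq_p a b r s" "0 < eq_q a b r s"
  using assms unfolding eq_p_def eq_q_def by simp_all

lemma ricker_step_linearization:
  assumes ab: "0 \<le> a" "a \<le> 1" "0 \<le> b" "b \<le> 1" "a * b < 1"
    and rs: "a * s < r" "b * r < s"
    and controls: "0 \<le> al" "al \<le> 1" "0 \<le> be" "be \<le> 1"
    and small: "norm (deviation a b r s z) \<le> 1 / 2"
  shows "norm (deviation a b r s (ricker_step a b r s al be z) - jac a b r s al be *v deviation a b r s z)
    \<le> 4 * (eq_p a b r s + eq_q a b r s + 2) * (norm (deviation a b r s z))\<^sup>2"
proof -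
  define p q where "p = eq_p a b r s" and "q = eq_q a b r s"
  obtain x y where z: "z = (x, y)"
    by fastforce
  define u v \<rho> where "u = x - p" and "v = y - q" and "\<rho> = norm (deviation a b r s z)"
  have dev: "deviation a b r s z = vector [u, v]"
    unfolding deviation_def z u_def v_def p_def q_def by simp
  have u: "\<bar>u\<bar> \<le> \<rho>" and v: "\<bar>v\<bar> \<le> \<rho>"
    using component_le_norm_cart[of "deviation a b r s z" 1] component_le_norm_cart[of "deviation a b r s z" 2]
    unfolding \<rho>_def dev by simp_all
  have pq: "0 < p" "0 < q" "p + a * q = r" "b * p + q = s"
    using eq_p_eq_q_pos[OF ab(5) rs] eq_p_eq_q_equilibrium[of a b r s] ab(5)
    unfolding p_def q_def by auto
  define R1 where "R1 = (p + u) * ((1 - al) * exp (- (u + a * v)) + (1 - (1 - al))) - p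
    - (u - (1 - al) * p * (u + a * v))"
  define R2 where "R2 = (q + v) * ((1 - be) * exp (- (v + b * u)) + (1 - (1 - be))) - q
    - (v - (1 - be) * q * (v + b * u))"
  have "r - x - a * y = - (u + a * v)" "s - b * x - y = - (v + b * u)"
    using pq(3,4) unfolding u_def v_def by (simp_all add: algebra_simps)
  then have step: "ricker_step a b r s al be z =
      (x * ((1 - al) * exp (- (u + a * v)) + al), y * ((1 - be) * exp (- (v + b * u)) + be))"
    unfolding ricker_step_def z by simp
  have x: "x = p + u" and y: "y = q + v"
    unfolding u_def v_def by simp_all
  have jac_dev: "jac a b r s al be *v deviation a b r s z =
      vector [u - (1 - al) * p * (u + a * v), v - (1 - be) * q * (v + b * u)]"
    unfolding dev jac_def Let_def p_def[symmetric] q_def[symmetric] matrix_vector_mult_2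
    by (simp add: algebra_simps)
  have "deviation a b r s (ricker_step a b r s al be z) - jac a b r s al be *v deviation a b r s z
      = vector [R1, R2]"
    unfolding jac_dev step
    by (simp add: deviation_def p_def[symmetric] q_def[symmetric] vec_eq_iff forall_2 R1_def R2_def x y)
  then have "norm (deviation a b r s (ricker_step a b r s al be z) - jac a b r s al be *v deviation a b r s z)
      \<le> \<bar>R1\<bar> + \<bar>R2\<bar>"
    using norm_le_l1_cart[of "vector [R1, R2] :: real^2"] by (simp add: sum_2)
  also have "\<dots> \<le> 4 * (p + 1) * \<rho>\<^sup>2 + 4 * (q + 1) * \<rho>\<^sup>2"
    unfolding R1_def R2_def using pq ab controls u v small
    by (intro add_mono ricker_factor_remainder_le) (simp_all add: \<rho>_def)
  finally show ?thesis
    unfolding \<rho>_def p_def q_def by (simp add: algebra_simps)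
qed

lemma stable_and_attractive_if_locally_contracting:
  fixes T :: "'a::metric_space \<Rightarrow> nat \<Rightarrow> 'a" and V :: "'a \<Rightarrow> real"
  assumes T0: "\<And>z. T z 0 = z"
    and lower: "\<And>z. m * dist z K \<le> V z" and upper: "\<And>z. V z \<le> M * dist z K"
    and m: "0 < m" and M: "0 < M" and \<mu>: "0 \<le> \<mu>" "\<mu> < 1" and \<delta>: "0 < \<delta>"
    and contract: "\<And>z n. V (T z n) \<le> \<delta> \<Longrightarrow> V (T z (Suc n)) \<le> \<mu> * V (T z n)"
  shows "(\<forall>\<epsilon>>0. \<exists>\<delta>>0. \<forall>z. dist z K < \<delta> \<longrightarrow> (\<forall>n. dist (T z n) K < \<epsilon>))
    \<and> (\<exists>\<delta>>0. \<forall>z. dist z K < \<delta> \<longrightarrow> T z \<longlonglongrightarrow> K)"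
proof -
  have V_nonneg: "0 \<le> V z" for z
    using lower[of z] m by (smt (verit) zero_le_dist mult_nonneg_nonneg)
  have decay: "V (T z n) \<le> \<mu> ^ n * V z" if "V z \<le> \<delta>" for z n
  proof (induction n)
    case 0
    then show ?case
      by (simp add: T0)
  next
    case (Suc n)
    have "\<mu> ^ n * V z \<le> V z"
      using \<mu> V_nonneg[of z] by (simp add: mult_left_le_one_le power_le_one)
    then have "V (T z (Suc n)) \<le> \<mu> * V (T z n)"
      using Suc that by (intro contract) simp
    also have "\<dots> \<le> \<mu> * (\<mu> ^ n * V z)"
      using Suc \<mu> by (simp add: mult_left_mono)
    finally show ?case
      by simp
  qed
  have bound: "dist (T z n) K \<le> \<mu> ^ n * (M / m * dist z K)" if "dist z K < \<delta> / M" for z n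
  proof -
    have "V z \<le> \<delta>"
      using upper[of z] that M by (simp add: field_simps)
    then have "m * dist (T z n) K \<le> \<mu> ^ n * (M * dist z K)"
      using lower[of "T z n"] decay[of z n] upper[of z] \<mu>
      by (meson mult_left_mono order_trans zero_le_power)
    then show ?thesis
      using m by (simp add: field_simps)
  qed
  have "\<exists>\<delta>'>0. \<forall>z. dist z K < \<delta>' \<longrightarrow> (\<forall>n. dist (T z n) K < \<epsilon>)" if "0 < \<epsilon>" for \<epsilon>
  proof (intro exI[of _ "min (\<delta> / M) (\<epsilon> * m / M)"] conjI allI impI)
    show "0 < min (\<delta> / M) (\<epsilon> * m / M)"
      using \<delta> that m M by simp
    fix z n
    assume z: "dist z K < min (\<delta> / M) (\<epsilon> * m / M)"
    have "dist (T z n) K \<le> \<mu> ^ n * (M / m * dist z K)"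
      using z by (intro bound) simp
    also have "\<dots> \<le> M / m * dist z K"
      using \<mu> m M by (intro mult_left_le_one_le power_le_one) simp_all
    also have "\<dots> < \<epsilon>"
      using z m M by (simp add: field_simps)
    finally show "dist (T z n) K < \<epsilon>" .
  qed
  moreover have "T z \<longlonglongrightarrow> K" if "dist z K < \<delta> / M" for z
  proof -
    have lim: "(\<lambda>n. \<mu> ^ n * (M / m * dist z K)) \<longlonglongrightarrow> 0"
      using \<mu> by (intro tendsto_mult_left_zero LIMSEQ_power_zero) simp_all
    have "(\<lambda>n. dist (T z n) K) \<longlonglongrightarrow> 0"
      by (rule tendsto_sandwich[OF _ _ tendsto_const lim]) (use bound[OF that] in simp_all)
    then show ?thesis
      by (rule tendsto_dist_iff[THEN iffD2])
  qed
  ultimately show ?thesis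
    using \<delta> M by (metis divide_pos_pos)
qed

lemma ricker_step_norm_estimate:
  assumes ab: "0 \<le> a" "a \<le> 1" "0 \<le> b" "b \<le> 1" "a * b < 1"
    and rs: "a * s < r" "b * r < s"
    and controls: "0 \<le> al" "al \<le> 1" "0 \<le> be" "be \<le> 1"
    and N: "is_norm_R2 N" and lower: "\<And>x. m * norm x \<le> N x" and m: "0 < m"
    and upper: "\<And>x. N x \<le> M * norm x" and M: "0 < M"
    and jac_bound: "\<And>x. N (jac a b r s al be *v x) \<le> lam * N x"
    and small: "N (deviation a b r s z) \<le> m / 2"
  shows "N (deviation a b r s (ricker_step a b r s al be z))
    \<le> lam * N (deviation a b r s z)
      + M * (4 * (eq_p a b r s + eq_q a b r s + 2)) / m\<^sup>2 * (N (deviation a b r s z))\<^sup>2"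
proof -
  define h h' where "h = deviation a b r s z" and "h' = deviation a b r s (ricker_step a b r s al be z)"
  define c where "c = 4 * (eq_p a b r s + eq_q a b r s + 2)"
  have c: "0 < c"
    using eq_p_eq_q_pos[OF ab(5) rs] unfolding c_def by simp
  have h_norm: "norm h \<le> N h / m"
    using lower[of h] m by (simp add: field_simps)
  have "N h / m \<le> (m / 2) / m"
    using small m unfolding h_def by (intro divide_right_mono) simp_all
  moreover have "(m / 2) / m = 1 / 2"
    using m by simp
  ultimately have "norm h \<le> 1 / 2"
    using h_norm by linarith
  then have remainder: "norm (h' - jac a b r s al be *v h) \<le> c * (norm h)\<^sup>2"
    unfolding h_def h'_def c_def by (rule ricker_step_linearization[OF ab rs controls])
  have tri: "N (x + y) \<le> N x + N y" for x y
    using N unfolding is_norm_R2_def by blast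
  have "N h' \<le> N (jac a b r s al be *v h) + N (h' - jac a b r s al be *v h)"
    using tri[of "jac a b r s al be *v h" "h' - jac a b r s al be *v h"] by simp
  also have "\<dots> \<le> lam * N h + M * (c * (norm h)\<^sup>2)"
    using jac_bound[of h] upper[of "h' - jac a b r s al be *v h"] remainder M
    by (smt (verit) mult_left_mono)
  also have "\<dots> \<le> lam * N h + M * (c * (N h / m)\<^sup>2)"
    using h_norm M c by (intro add_left_mono mult_left_mono power_mono) simp_all
  finally show ?thesis
    unfolding h_def h'_def c_def by (simp add: power_divide)
qed

lemma ricker_step_contracts_near_equilibrium:
  assumes ab: "0 \<le> a" "a \<le> 1" "0 \<le> b" "b \<le> 1" "a * b < 1"
    and rs: "a * s < r" "b * r < s"
    and N: "is_norm_R2 N" and lam: "lam < 1"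
  shows "\<exists>\<delta>>0. \<forall>al be z. 0 \<le> al \<longrightarrow> al \<le> 1 \<longrightarrow> 0 \<le> be \<longrightarrow> be \<le> 1 \<longrightarrow>
      (\<forall>x. N (jac a b r s al be *v x) \<le> lam * N x) \<longrightarrow> N (deviation a b r s z) \<le> \<delta> \<longrightarrow>
      N (deviation a b r s (ricker_step a b r s al be z)) \<le> (1 + lam) / 2 * N (deviation a b r s z)"
proof -
  obtain m M where m: "0 < m" "\<And>x. m * norm x \<le> N x" and M: "0 < M" "\<And>x. N x \<le> M * norm x"
    using is_norm_R2_imp_equivalent_to_norm[OF N] by blast
  define \<kappa> where "\<kappa> = M * (4 * (eq_p a b r s + eq_q a b r s + 2)) / m\<^sup>2"
  have \<kappa>: "0 < \<kappa>"
    using eq_p_eq_q_pos[OF ab(5) rs] m M unfolding \<kappa>_def by simp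
  \<comment> \<open>Below \<delta> the quadratic error term is at most half of the gap 1 - lam.\<close>
  define \<delta> where "\<delta> = min (m / 2) ((1 - lam) / (2 * \<kappa>))"
  show ?thesis
  proof (intro exI[of _ \<delta>] conjI allI impI)
    show "0 < \<delta>"
      using m \<kappa> lam unfolding \<delta>_def by simp
    fix al be z
    assume controls: "0 \<le> al" "al \<le> 1" "0 \<le> be" "be \<le> 1"
      and jac_bound: "\<forall>x. N (jac a b r s al be *v x) \<le> lam * N x"
      and small: "N (deviation a b r s z) \<le> \<delta>"
    define h h' where "h = deviation a b r s z" and "h' = deviation a b r s (ricker_step a b r s al be z)"
    have "N h' \<le> lam * N h + \<kappa> * (N h)\<^sup>2"
      using small unfolding h_def h'_def \<kappa>_def \<delta>_def
      by (intro ricker_step_norm_estimate[OF ab rs controls N m(2,1) M(2,1)]) (simp_all add: jac_bound)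
    also have "\<kappa> * (N h)\<^sup>2 \<le> (1 - lam) / 2 * N h"
    proof -
      have "\<kappa> * N h \<le> (1 - lam) / 2"
        using small \<kappa> unfolding h_def \<delta>_def by (simp add: field_simps)
      then show ?thesis
        using N unfolding is_norm_R2_def power2_eq_square by (metis mult.assoc mult_right_mono)
    qed
    finally show "N h' \<le> (1 + lam) / 2 * N h"
      by (simp add: field_simps)
  qed
qed

theorem loc_asym_stable_if_jac_uniformly_contracting:
  assumes ab: "0 < a" "a < 1" "0 < b" "b < 1" and rs: "a * s < r" "b * r < s"
    and controls: "\<And>n. 0 \<le> alpha n" "\<And>n. alpha n \<le> 1" "\<And>n. 0 \<le> beta n" "\<And>n. beta n \<le> 1"
    and N: "is_norm_R2 N" and lam: "0 \<le> lam" "lam < 1"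
    and jac_bound: "\<And>n x. N (jac a b r s (alpha n) (beta n) *v x) \<le> lam * N x"
  shows "loc_asym_stable a b r s alpha beta"
proof -
  have ab': "0 \<le> a" "a \<le> 1" "0 \<le> b" "b \<le> 1" "a * b < 1"
    using ab mult_strict_mono[of a 1 b 1] by simp_all
  obtain m M where m: "0 < m" "\<And>x. m * norm x \<le> N x" and M: "0 < M" "\<And>x. N x \<le> M * norm x"
    using is_norm_R2_imp_equivalent_to_norm[OF N] by blast
  obtain \<delta> where \<delta>: "0 < \<delta>" and contract: "\<forall>al be z. 0 \<le> al \<longrightarrow> al \<le> 1 \<longrightarrow> 0 \<le> be \<longrightarrow> be \<le> 1 \<longrightarrow>
      (\<forall>x. N (jac a b r s al be *v x) \<le> lam * N x) \<longrightarrow> N (deviation a b r s z) \<le> \<delta> \<longrightarrow>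
      N (deviation a b r s (ricker_step a b r s al be z)) \<le> (1 + lam) / 2 * N (deviation a b r s z)"
    using ricker_step_contracts_near_equilibrium[OF ab' rs N lam(2)] by blast
  define K where "K = (eq_p a b r s, eq_q a b r s)"
  have "(\<forall>\<epsilon>>0. \<exists>\<delta>>0. \<forall>z. dist z K < \<delta> \<longrightarrow> (\<forall>n. dist (traj a b r s alpha beta z n) K < \<epsilon>))
    \<and> (\<exists>\<delta>>0. \<forall>z. dist z K < \<delta> \<longrightarrow> traj a b r s alpha beta z \<longlonglongrightarrow> K)"
  proof (rule stable_and_attractive_if_locally_contracting[where V = "\<lambda>z. N (deviation a b r s z)"])
    show "m * dist z K \<le> N (deviation a b r s z)" "N (deviation a b r s z) \<le> M * dist z K" for z
      using m(2)[of "deviation a b r s z"] M(2)[of "deviation a b r s z"]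
      unfolding K_def norm_deviation by simp_all
    show "N (deviation a b r s (traj a b r s alpha beta z (Suc n)))
        \<le> (1 + lam) / 2 * N (deviation a b r s (traj a b r s alpha beta z n))"
      if "N (deviation a b r s (traj a b r s alpha beta z n)) \<le> \<delta>" for z n
      unfolding traj_Suc_ricker_step
      by (rule contract[rule_format]) (simp_all add: controls jac_bound that)
  qed (use m M lam \<delta> in simp_all)
  then show ?thesis
    unfolding loc_asym_stable_def K_def Let_def .
qed

lemma ricker_row_sum_uniform_bound:
  fixes a p lo hi :: real
  assumes a: "0 \<le> a" "a < 1" and p: "0 < p" and hi: "hi < 1"
    and lo: "max (1 - 2 / (p * (1 + a))) 0 < lo"
  obtains L where "L < 1"
    "\<And>al. lo < al \<Longrightarrow> al < hi \<Longrightarrow> \<bar>1 - (1 - al) * p\<bar> + \<bar>- a * (1 - al) * p\<bar> \<le> L"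
proof
  define L where "L = max (1 - (1 - a) * (1 - hi) * p) ((1 + a) * (1 - lo) * p - 1)"
  have "0 < (1 - a) * (1 - hi) * p"
    using a hi p by simp
  moreover have "1 - lo < 2 / (p * (1 + a))"
    using lo by simp
  then have "(1 - lo) * (p * (1 + a)) < 2"
    using a p by (simp add: less_divide_eq)
  ultimately show "L < 1"
    unfolding L_def by (simp add: algebra_simps)
  fix al
  assume al: "lo < al" "al < hi"
  have c: "0 \<le> 1 - al"
    using al hi by simp
  have "\<bar>- a * (1 - al) * p\<bar> = a * (1 - al) * p"
    using a c p by (simp add: abs_mult)
  moreover have "(1 - a) * (1 - hi) * p \<le> (1 - a) * (1 - al) * p"
    using a al p by (intro mult_right_mono mult_left_mono) simp_all
  moreover have "(1 + a) * (1 - al) * p \<le> (1 + a) * (1 - lo) * p"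
    using a al p by (intro mult_right_mono mult_left_mono) simp_all
  ultimately show "\<bar>1 - (1 - al) * p\<bar> + \<bar>- a * (1 - al) * p\<bar> \<le> L"
    unfolding L_def by (cases "(1 - al) * p \<le> 1") (simp_all add: algebra_simps)
qed

lemma jac_infnorm_uniformly_contracting:
  assumes ab: "0 < a" "a < 1" "0 < b" "b < 1" and rs: "a * s < r" "b * r < s"
    and alpha: "\<And>n. al_lo < alpha n" "\<And>n. alpha n < al_hi" "al_hi < 1"
      "max (1 - 2 / (eq_p a b r s * (1 + a))) 0 < al_lo"
    and beta: "\<And>n. be_lo < beta n" "\<And>n. beta n < be_hi" "be_hi < 1"
      "max (1 - 2 / (eq_q a b r s * (1 + b))) 0 < be_lo"
  obtains lam where "0 \<le> lam" "lam < 1"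
    "\<And>n x. infnorm (jac a b r s (alpha n) (beta n) *v x) \<le> lam * infnorm x"
proof -
  have "a * b < 1"
    using ab mult_strict_mono[of a 1 b 1] by simp
  note pq = eq_p_eq_q_pos[OF this rs]
  obtain L1 where L1: "L1 < 1" "\<And>al. al_lo < al \<Longrightarrow> al < al_hi \<Longrightarrow>
      \<bar>1 - (1 - al) * eq_p a b r s\<bar> + \<bar>- a * (1 - al) * eq_p a b r s\<bar> \<le> L1"
    using ricker_row_sum_uniform_bound[OF _ ab(2) pq(1) alpha(3,4)] ab(1) by auto
  obtain L2 where L2: "L2 < 1" "\<And>be. be_lo < be \<Longrightarrow> be < be_hi \<Longrightarrow>
      \<bar>1 - (1 - be) * eq_q a b r s\<bar> + \<bar>- b * (1 - be) * eq_q a b r s\<bar> \<le> L2"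
    using ricker_row_sum_uniform_bound[OF _ ab(4) pq(2) beta(3,4)] ab(3) by auto
  show thesis
  proof
    show "0 \<le> max (max L1 L2) 0" "max (max L1 L2) 0 < 1"
      using L1(1) L2(1) by simp_all
    show "infnorm (jac a b r s (alpha n) (beta n) *v x) \<le> max (max L1 L2) 0 * infnorm x" for n x
    proof (rule infnorm_matrix_vector_mult_le)
      show "(\<Sum>j\<in>UNIV. \<bar>jac a b r s (alpha n) (beta n) $ i $ j\<bar>) \<le> max (max L1 L2) 0" for i
        using L1(2)[OF alpha(1,2), of n] L2(2)[OF beta(1,2), of n] exhaust_2[of i]
        by (auto simp: jac_def Let_def sum_2 add.commute le_max_iff_disj)
    qed
  qed
qed

theorem mainTheorem7:
  fixes a b r s :: real and alpha beta :: "nat \<Rightarrow> real"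
  assumes "0 < a" "a < 1" "0 < b" "b < 1" "r > a * s" "s > b * r"
    and "(\<exists>lam N al_lo al_hi be_lo be_hi.
            0 < lam \<and> lam < 1 \<and> is_norm_R2 N \<and>
            0 \<le> al_lo \<and> al_lo < al_hi \<and> al_hi < 1 \<and>
            0 \<le> be_lo \<and> be_lo < be_hi \<and> be_hi < 1 \<and>
            (\<forall>n. al_lo < alpha n \<and> alpha n < al_hi \<and>
                 be_lo < beta n \<and> beta n < be_hi \<and>
                 induced_norm N (jac a b r s (alpha n) (beta n)) \<le> lam))
       \<or> (\<exists>al_lo al_hi be_lo be_hi.
            0 \<le> al_lo \<and> al_lo < al_hi \<and> al_hi < 1 \<and>
            0 \<le> be_lo \<and> be_lo < be_hi \<and> be_hi < 1 \<and>
            max (1 - 2 / (eq_p a b r s * (1 + a))) 0 < al_lo \<and> al_lo < 1 \<and>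
            max (1 - 2 / (eq_q a b r s * (1 + b))) 0 < be_lo \<and> be_lo < 1 \<and>
            (\<forall>n. al_lo < alpha n \<and> alpha n < al_hi \<and>
                 be_lo < beta n \<and> beta n < be_hi))"
  shows "loc_asym_stable a b r s alpha beta"
  using assms(7)
proof (elim disjE exE conjE)
  fix lam N al_lo al_hi be_lo be_hi
  assume N: "is_norm_R2 N" and lam: "0 < lam" "lam < 1"
    and ranges: "0 \<le> al_lo" "al_hi < 1" "0 \<le> be_lo" "be_hi < 1"
    and controls: "\<forall>n. al_lo < alpha n \<and> alpha n < al_hi \<and> be_lo < beta n \<and> beta n < be_hi \<and>
      induced_norm N (jac a b r s (alpha n) (beta n)) \<le> lam"
  have "N (jac a b r s (alpha n) (beta n) *v x) \<le> lam * N x" for n x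
    using induced_norm_bound[OF N] controls mult_right_mono N[unfolded is_norm_R2_def] by (meson order_trans)
  with N lam ranges controls show ?thesis
    by (intro loc_asym_stable_if_jac_uniformly_contracting[OF assms(1-6) _ _ _ _ N, where lam = lam])
      (auto intro: less_imp_le order.strict_trans1 order.strict_trans)
next
  fix al_lo al_hi be_lo be_hi
  assume ranges: "0 \<le> al_lo" "al_hi < 1" "0 \<le> be_lo" "be_hi < 1"
    and lo: "max (1 - 2 / (eq_p a b r s * (1 + a))) 0 < al_lo" "max (1 - 2 / (eq_q a b r s * (1 + b))) 0 < be_lo"
    and controls: "\<forall>n. al_lo < alpha n \<and> alpha n < al_hi \<and> be_lo < beta n \<and> beta n < be_hi"
  obtain lam where "0 \<le> lam" "lam < 1"
    "\<And>n x. infnorm (jac a b r s (alpha n) (beta n) *v x) \<le> lam * infnorm x"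
    using jac_infnorm_uniformly_contracting[OF assms(1-6), of al_lo alpha al_hi be_lo beta be_hi]
      controls ranges lo by blast
  with ranges controls show ?thesis
    by (intro loc_asym_stable_if_jac_uniformly_contracting[OF assms(1-6) _ _ _ _ is_norm_R2_infnorm, where lam = lam])
      (auto intro: less_imp_le order.strict_trans1 order.strict_trans)
qed

end
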